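(* Let $x^*\in\Delta$ be a strict Nash equilibrium. Then $x^*$ is an attracting mutation limit point: $\{x^*\}$ is a mutation limit, and for every $c\in\operatorname{int}\Delta$ and every sequence of mutation equilibria $(x_n)$ for $c$ (with rates $M_n>0$, $M_n\to 0$) converging to $x^*$, there is $m>0$ such that $x_n$ is an asymptotically stable equilibrium of $\dot x=\phi^{M_n}(x)$ whenever $M_n<m$.
   Context: Let $I=\{1,\dots,N\}$ be a finite set of populations; population $i$ has the finite type set $S_i=\{1,\dots,n_i\}$. Let $S=\{(i,h): i\in I, h\in S_i\}$, $\Delta_i=\{x_i\in\mathbb R^{n_i}_{\ge 0}:\sum_{h\le n_i}x_{ih}=1\}$, $\Delta=\prod_{i\in I}\Delta_i\subset\mathbb R^S$, and $\operatorname{int}\Delta=\{x\in\Delta: x_{ih}>0 \text{ for all }(i,h)\in S\}$. For each $(i,h)\in S$ let $f_{ih}\in C^1(U,\mathbb R)$ for some open $U\supset\Delta$, with $\partial f_{ih}/\partial x_{ik}=0$ for all $i\in I$, $h,k\in S_i$. Put $\bar f_i(x)=\sum_{h\le n_i}x_{ih}f_{ih}(x)$, $g_{ih}=f_{ih}-\bar f_i$, and for $M\ge0$, $c\in\operatorname{int}\Delta$, $\phi^M_{ih}(x)=x_{ih}g_{ih}(x)+M(c_{ih}-x_{ih})$ (replicator–mutator dynamics; stability refers to its flow on $\Delta$). A strict Nash equilibrium is $x^*\in\Delta$ such that for all $i\in I$ and all $z_i\in\Delta_i\setminus\{x_i^*\}$, $\bar f_i(x^* )>\bar f_i(x^*_{-i},z_i)$,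 where $(x^*_{-i},z_i)$ is $x^*$ with its $i$-th component replaced by $z_i$. A mutation equilibrium for $M$ (w.r.t. $c$) is $x\in\Delta$ with $\phi^M(x)=0$; a sequence of mutation equilibria for $c$ is $(x_n)\subset\Delta$ with $M_n>0$, $M_n\to0$, $\phi^{M_n}(x_n)=0$. A mutation limit is a nonempty connected compact set $X\subset\Delta$ such that for every $c\in\operatorname{int}\Delta$ there is a sequence of mutation equilibria for $c$ converging to an element of $X$, and no proper subset of $X$ is a connected compact set with this property. A mutation limit $X$ is attracting if for every $c\in\operatorname{int}\Delta$ and every sequence of mutation equilibria for $c$ converging to an element of $X$, there is $m>0$ such that all terms with rate $M_n<m$ are asymptotically stable. *)

theory Defs
  imports "HOL-Analysis.Analysis"
begin

text \<open>Populations are the elements of the finite type 'i, the set S of all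
(population, type) pairs is the finite type 's, and pop s is the population
of s.  Points of R^S are vectors real^'s.\<close>

definition Delta :: "('s::finite \<Rightarrow> 'i::finite) \<Rightarrow> (real^'s) set" where
  "Delta pop = {x. (\<forall>s. 0 \<le> x$s) \<and> (\<forall>i. (\<Sum>s\<in>{s. pop s = i}. x$s) = 1)}"

definition int_Delta :: "('s::finite \<Rightarrow> 'i::finite) \<Rightarrow> (real^'s) set" where
  "int_Delta pop = {x \<in> Delta pop. \<forall>s. 0 < x$s}"

text \<open>Delta_i, represented by vectors whose population-i components form a point
of the simplex (other components irrelevant).\<close>
definition Delta_pop :: "('s::finite \<Rightarrow> 'i::finite) \<Rightarrow> 'i \<Rightarrow> (real^'s) set" where
  "Delta_pop pop i = {z. (\<forall>s. pop s = i \<longrightarrow> 0 \<le> z$s) \<and> (\<Sum>s\<in>{s. pop s = i}. z$s) = 1}"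

definition replace_pop :: "('s::finite \<Rightarrow> 'i) \<Rightarrow> 'i \<Rightarrow> real^'s \<Rightarrow> real^'s \<Rightarrow> real^'s" where
  "replace_pop pop i x z = (\<chi> s. if pop s = i then z$s else x$s)"

definition fbar :: "('s::finite \<Rightarrow> 'i) \<Rightarrow> ('s \<Rightarrow> real^'s \<Rightarrow> real) \<Rightarrow> 'i \<Rightarrow> real^'s \<Rightarrow> real" where
  "fbar pop f i x = (\<Sum>s\<in>{s. pop s = i}. x$s * f s x)"

definition gfit :: "('s::finite \<Rightarrow> 'i) \<Rightarrow> ('s \<Rightarrow> real^'s \<Rightarrow> real) \<Rightarrow> 's \<Rightarrow> real^'s \<Rightarrow> real" where
  "gfit pop f s x = f s x - fbar pop f (pop s) x"

definition phi :: "('s::finite \<Rightarrow> 'i) \<Rightarrow> ('s \<Rightarrow> real^'s \<Rightarrow> real) \<Rightarrow> real^'s \<Rightarrow> real \<Rightarrow> real^'s \<Rightarrow> real^'s" where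
  "phi pop f c M x = (\<chi> s. x$s * gfit pop f s x + M * (c$s - x$s))"

definition strict_nash :: "('s::finite \<Rightarrow> 'i::finite) \<Rightarrow> ('s \<Rightarrow> real^'s \<Rightarrow> real) \<Rightarrow> real^'s \<Rightarrow> bool" where
  "strict_nash pop f x \<longleftrightarrow> x \<in> Delta pop \<and>
     (\<forall>i. \<forall>z \<in> Delta_pop pop i. (\<exists>s. pop s = i \<and> z$s \<noteq> x$s) \<longrightarrow>
        fbar pop f i x > fbar pop f i (replace_pop pop i x z))"

definition C1_on :: "(real^'s::finite) set \<Rightarrow> (real^'s \<Rightarrow> real) \<Rightarrow> (real^'s \<Rightarrow> ((real^'s) \<Rightarrow>\<^sub>L real)) \<Rightarrow> bool" where
  "C1_on U g g' \<longleftrightarrow> (\<forall>x\<in>U. (g has_derivative blinfun_apply (g' x)) (at x)) \<and> continuous_on U g'"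

definition mut_eq_seq :: "('s::finite \<Rightarrow> 'i::finite) \<Rightarrow> ('s \<Rightarrow> real^'s \<Rightarrow> real) \<Rightarrow> real^'s
    \<Rightarrow> (nat \<Rightarrow> real^'s) \<Rightarrow> (nat \<Rightarrow> real) \<Rightarrow> bool" where
  "mut_eq_seq pop f c xs Ms \<longleftrightarrow>
     (\<forall>n. 0 < Ms n \<and> xs n \<in> Delta pop \<and> phi pop f c (Ms n) (xs n) = 0) \<and> Ms \<longlonglongrightarrow> 0"

definition reached_by_mut_eq :: "('s::finite \<Rightarrow> 'i::finite) \<Rightarrow> ('s \<Rightarrow> real^'s \<Rightarrow> real) \<Rightarrow> (real^'s) set \<Rightarrow> bool" where
  "reached_by_mut_eq pop f X \<longleftrightarrow>
     (\<forall>c \<in> int_Delta pop. \<exists>xs Ms. mut_eq_seq pop f c xs Ms \<and> (\<exists>x\<in>X. xs \<longlonglongrightarrow> x))"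

definition mutation_limit :: "('s::finite \<Rightarrow> 'i::finite) \<Rightarrow> ('s \<Rightarrow> real^'s \<Rightarrow> real) \<Rightarrow> (real^'s) set \<Rightarrow> bool" where
  "mutation_limit pop f X \<longleftrightarrow>
     X \<noteq> {} \<and> connected X \<and> compact X \<and> X \<subseteq> Delta pop \<and> reached_by_mut_eq pop f X \<and>
     (\<forall>Y. Y \<subset> X \<and> connected Y \<and> compact Y \<longrightarrow> \<not> reached_by_mut_eq pop f Y)"

definition is_solution_in :: "(real^'s::finite \<Rightarrow> real^'s) \<Rightarrow> (real^'s) set \<Rightarrow> (real \<Rightarrow> real^'s) \<Rightarrow> bool" where
  "is_solution_in F D y \<longleftrightarrow>
     (\<forall>t\<ge>0. y t \<in> D \<and> (y has_vector_derivative F (y t)) (at t within {0..}))"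

definition asymp_stable :: "(real^'s::finite \<Rightarrow> real^'s) \<Rightarrow> (real^'s) set \<Rightarrow> real^'s \<Rightarrow> bool" where
  "asymp_stable F D x0 \<longleftrightarrow> x0 \<in> D \<and> F x0 = 0 \<and>
     (\<forall>\<epsilon>>0. \<exists>\<delta>>0. \<forall>y. is_solution_in F D y \<and> dist (y 0) x0 < \<delta> \<longrightarrow> (\<forall>t\<ge>0. dist (y t) x0 < \<epsilon>)) \<and>
     (\<exists>\<eta>>0. \<forall>y. is_solution_in F D y \<and> dist (y 0) x0 < \<eta> \<longrightarrow> (y \<longlongrightarrow> x0) at_top)"

definition attracting_mutation_limit :: "('s::finite \<Rightarrow> 'i::finite) \<Rightarrow> ('s \<Rightarrow> real^'s \<Rightarrow> real) \<Rightarrow> (real^'s) set \<Rightarrow> bool" where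
  "attracting_mutation_limit pop f X \<longleftrightarrow> mutation_limit pop f X \<and>
     (\<forall>c \<in> int_Delta pop. \<forall>xs Ms. mut_eq_seq pop f c xs Ms \<and> (\<exists>x\<in>X. xs \<longlonglongrightarrow> x) \<longrightarrow>
        (\<exists>m>0. \<forall>n. Ms n < m \<longrightarrow> asymp_stable (phi pop f c (Ms n)) (Delta pop) (xs n)))"

end

theory Submission
  imports Defs
begin

text \<open>A strict Nash equilibrium x* is pure: each population i plays a single type, its
  unique best reply, and every other (inferior) type earns strictly less.  By continuity
  this fitness gap a persists on the set of states in which all inferior types have
  share at most r.  There selection lowers inferior shares at rate a while mutation of
  rate M raises them by at most M, so for M \<le> a r an Euler step of the
  replicator--mutator field maps that set into itself, and Brouwer's theorem yields a
  mutation equilibrium in it; letting M \<rightarrow> 0 these equilibria converge to x*, so {x*} is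
  a mutation limit.  Near any such equilibrium the squared distance in the inferior
  coordinates alone (which determine the others on the simplex) decays exponentially
  along solutions, which gives asymptotic stability once the equilibrium is close
  enough to x*, i.e. for all sufficiently small rates.\<close>

section \<open>Lipschitz bounds and exponential decay\<close>

lemma lipschitz_on_mult_real:
  fixes g h :: "'a::metric_space \<Rightarrow> real"
  assumes "C-lipschitz_on U g" "D-lipschitz_on U h"
    and "\<And>x. x \<in> U \<Longrightarrow> \<bar>g x\<bar> \<le> A" "\<And>x. x \<in> U \<Longrightarrow> \<bar>h x\<bar> \<le> B"
    and "0 \<le> A" "0 \<le> B"
  shows "(A * D + B * C)-lipschitz_on U (\<lambda>x. g x * h x)"
proof (rule lipschitz_onI)
  fix x y assume x: "x \<in> U" and y: "y \<in> U"
  have "g x * h x - g y * h y = g x * (h x - h y) + h y * (g x - g y)"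
    by (simp add: algebra_simps)
  hence "dist (g x * h x) (g y * h y) \<le> \<bar>g x\<bar> * dist (h x) (h y) + \<bar>h y\<bar> * dist (g x) (g y)"
    by (simp add: dist_real_def flip: abs_mult)
  also have "\<dots> \<le> A * (D * dist x y) + B * (C * dist x y)"
    using assms x y by (intro add_mono mult_mono) (auto intro: lipschitz_onD)
  finally show "dist (g x * h x) (g y * h y) \<le> (A * D + B * C) * dist x y"
    by (simp add: algebra_simps)
next
  show "0 \<le> A * D + B * C"
    using assms(5,6) lipschitz_on_nonneg[OF assms(1)] lipschitz_on_nonneg[OF assms(2)] by simp
qed

lemma lipschitz_on_sum:
  fixes g :: "'j \<Rightarrow> 'a::metric_space \<Rightarrow> 'b::real_normed_vector"
  assumes "finite J" "\<And>j. j \<in> J \<Longrightarrow> (C j)-lipschitz_on U (g j)"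
  shows "(\<Sum>j\<in>J. C j)-lipschitz_on U (\<lambda>x. \<Sum>j\<in>J. g j x)"
  using assms by (induction J rule: finite_induct) (auto intro: lipschitz_intros)

lemma lipschitz_on_finite_family:
  fixes g :: "'j::finite \<Rightarrow> 'a::metric_space \<Rightarrow> 'b::real_normed_vector"
  assumes "\<And>j. \<exists>C. C-lipschitz_on U (g j)"
  shows "\<exists>C>0. \<forall>j. C-lipschitz_on U (g j)"
proof -
  obtain C where C: "\<And>j. (C j)-lipschitz_on U (g j)" using assms by metis
  have "C j \<le> 1 + (\<Sum>j\<in>UNIV. C j)" for j
    using member_le_sum[of j UNIV C] C lipschitz_on_nonneg by fastforce
  moreover have "0 < 1 + (\<Sum>j\<in>UNIV. C j)"
    using C lipschitz_on_nonneg by (smt (verit) sum_nonneg)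
  ultimately show ?thesis using C lipschitz_on_mono[OF C subset_refl] by blast
qed

lemma finite_family_bounded_on_compact:
  fixes g :: "'j::finite \<Rightarrow> 'a::topological_space \<Rightarrow> 'b::real_normed_vector"
  assumes "compact K" "\<And>j. continuous_on K (g j)"
  shows "\<exists>B>0. \<forall>j. \<forall>x\<in>K. norm (g j x) \<le> B"
proof -
  have "compact (\<Union>j. g j ` K)"
    using assms by (intro compact_UN compact_continuous_image) auto
  then obtain B where "B > 0" "\<forall>y\<in>(\<Union>j. g j ` K). norm y \<le> B"
    using compact_imp_bounded bounded_pos by metis
  thus ?thesis by blast
qed

lemma exp_decay_until:
  fixes V V' :: "real \<Rightarrow> real"
  assumes der: "\<And>t. t \<ge> 0 \<Longrightarrow> (V has_real_derivative V' t) (at t within {0..})"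
    and dec: "\<And>t. t \<ge> 0 \<Longrightarrow> V t < B \<Longrightarrow> V' t \<le> - a * V t"
    and t: "0 < t" and below: "\<And>s. 0 \<le> s \<Longrightarrow> s < t \<Longrightarrow> V s < B"
  shows "V t * exp (a * t) \<le> V 0"
proof -
  define W where "W s = V s * exp (a * s)" for s
  define W' where "W' s = V' s * exp (a * s) + V s * (a * exp (a * s))" for s
  have dW: "(W has_real_derivative W' s) (at s within {0..})" if "s \<ge> 0" for s
    unfolding W_def W'_def by (rule derivative_eq_intros der[OF that] | simp)+
  have "continuous_on {0..} W"
    unfolding continuous_on_eq_continuous_within using dW DERIV_continuous by fastforce
  hence contW: "continuous_on {0..t} W" by (rule continuous_on_subset) auto
  have dWat: "(W has_real_derivative W' s) (at s)" if "0 < s" for s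
    using dW[of s] that at_within_interior[of s "{0..}"] by fastforce
  obtain z where z: "0 < z" "z < t" "W t - W 0 = t * W' z"
    using MVT[OF t contW] dWat DERIV_unique real_differentiable_def by (metis diff_zero)
  have "V' z \<le> - a * V z" using dec below z by auto
  hence "W' z \<le> 0"
    unfolding W'_def by (smt (verit) exp_gt_zero mult_minus_left distrib_right
        mult.assoc mult.commute mult_nonpos_nonneg)
  hence "t * W' z \<le> 0" using t by (simp add: mult_nonneg_nonpos)
  hence "W t \<le> W 0" using z by linarith
  thus ?thesis unfolding W_def by simp
qed

text \<open>The threshold B is never reached: at the first time V t = B, exp_decay_until
  would already give V t \<le> V 0 < B.\<close>
lemma exp_decay_below_threshold:
  fixes V V' :: "real \<Rightarrow> real"
  assumes der: "\<And>t. t \<ge> 0 \<Longrightarrow> (V has_real_derivative V' t) (at t within {0..})"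
    and dec: "\<And>t. t \<ge> 0 \<Longrightarrow> V t < B \<Longrightarrow> V' t \<le> - a * V t"
    and V0: "V 0 < B" and Vnn: "\<And>t. t \<ge> 0 \<Longrightarrow> 0 \<le> V t" and a: "a \<ge> 0"
    and t: "t \<ge> 0"
  shows "V t \<le> V 0 * exp (- a * t)"
proof -
  have below: "V t < B" if "t \<ge> 0" for t
  proof (rule ccontr)
    assume "\<not> V t < B"
    define A where "A = {0..} \<inter> V -` {B..}"
    have "continuous_on {0..} V"
      unfolding continuous_on_eq_continuous_within using der DERIV_continuous by fastforce
    hence "closed A" unfolding A_def by (rule continuous_closed_preimage) auto
    moreover have "t \<in> A" using that \<open>\<not> V t < B\<close> by (auto simp: A_def)
    moreover have bdd: "bdd_below A" unfolding A_def by (rule bdd_belowI[of _ 0]) auto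
    ultimately have "Inf A \<in> A" using closed_contains_Inf by blast
    hence t1: "Inf A \<ge> 0" "V (Inf A) \<ge> B" by (auto simp: A_def)
    hence pos: "Inf A > 0" using V0 by (cases "Inf A = 0") auto
    have "V s < B" if "0 \<le> s" "s < Inf A" for s
      using that cInf_lower[OF _ bdd, of s] by (force simp: A_def)
    hence "V (Inf A) * exp (a * Inf A) \<le> V 0"
      using exp_decay_until[OF der dec pos] by blast
    moreover have "V (Inf A) \<le> V (Inf A) * exp (a * Inf A)"
      using Vnn[OF t1(1)] a t1(1) by (simp add: mult_le_cancel_left1)
    ultimately show False using t1 V0 by linarith
  qed
  have "V t * exp (a * t) \<le> V 0"
    using exp_decay_until[OF der dec _ below] t by (cases "t = 0") auto
  hence "V t * exp (a * t) * exp (- a * t) \<le> V 0 * exp (- a * t)" by simp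
  thus ?thesis by (simp add: mult.assoc flip: exp_add)
qed

section \<open>Quadratic Lyapunov functions\<close>

definition sq_dist_on :: "'n set \<Rightarrow> real^'n \<Rightarrow> real^'n \<Rightarrow> real" where
  "sq_dist_on S x y = (\<Sum>s\<in>S. (x$s - y$s)^2)"

lemma sq_dist_on_nonneg: "0 \<le> sq_dist_on S x y"
  by (simp add: sq_dist_on_def sum_nonneg)

lemma sq_dist_on_le_norm: "sq_dist_on S x y \<le> (norm (x - y))^2"
proof -
  have "sq_dist_on S x y \<le> (\<Sum>s\<in>UNIV. (x$s - y$s)^2)"
    unfolding sq_dist_on_def by (rule sum_mono2) auto
  thus ?thesis by (simp add: norm_vec_def L2_set_def sum_nonneg)
qed

lemma has_real_derivative_sq_dist_on_solution:
  assumes "is_solution_in F D y" "t \<ge> 0"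
  shows "((\<lambda>t. sq_dist_on S (y t) x0) has_real_derivative
           (\<Sum>s\<in>S. 2 * (y t $ s - x0$s) * F (y t) $ s)) (at t within {0..})"
  unfolding sq_dist_on_def
proof (rule DERIV_sum)
  fix s
  have "(y has_vector_derivative F (y t)) (at t within {0..})"
    using assms by (simp add: is_solution_in_def)
  hence "((\<lambda>t. y t $ s) has_real_derivative F (y t) $ s) (at t within {0..})"
    using bounded_linear.has_vector_derivative[OF bounded_linear_vec_nth]
    by (simp add: has_real_derivative_iff_has_vector_derivative)
  thus "((\<lambda>t. (y t $ s - x0$s)^2) has_real_derivative 2 * (y t $ s - x0$s) * F (y t) $ s)
      (at t within {0..})"
    by (auto intro!: derivative_eq_intros)
qed

lemma asymp_stable_quadratic_lyapunov:
  fixes F :: "real^'n::finite \<Rightarrow> real^'n"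
  assumes "x0 \<in> D" "F x0 = 0" and a: "a > 0" and \<rho>: "\<rho> > 0" and K: "0 \<le> K"
    and norm_le: "\<And>z. z \<in> D \<Longrightarrow> (norm (z - x0))^2 \<le> K * sq_dist_on S z x0"
    and decrease: "\<And>z. z \<in> D \<Longrightarrow> sq_dist_on S z x0 < \<rho>^2 \<Longrightarrow>
        (\<Sum>s\<in>S. 2 * (z$s - x0$s) * F z $ s) \<le> - a * sq_dist_on S z x0"
  shows "asymp_stable F D x0"
proof -
  have decay: "(norm (y t - x0))^2 \<le> K * (norm (y 0 - x0))^2 * exp (- a * t)"
    if y: "is_solution_in F D y" and y0: "norm (y 0 - x0) < \<rho>" and t: "t \<ge> 0" for y t
  proof -
    have yD: "y t \<in> D" if "t \<ge> 0" for t using y that by (simp add: is_solution_in_def)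
    have "sq_dist_on S (y 0) x0 < \<rho>^2"
      using sq_dist_on_le_norm[of S "y 0" x0] power_strict_mono[OF y0, of 2] by simp
    hence "sq_dist_on S (y t) x0 \<le> sq_dist_on S (y 0) x0 * exp (- a * t)"
      using has_real_derivative_sq_dist_on_solution[OF y] decrease[OF yD] a t sq_dist_on_nonneg
      by (intro exp_decay_below_threshold[where B = "\<rho>^2"]) auto
    also have "\<dots> \<le> (norm (y 0 - x0))^2 * exp (- a * t)"
      by (intro mult_right_mono sq_dist_on_le_norm) simp
    finally show ?thesis
      using norm_le[OF yD[OF t]] K by (smt (verit) mult.assoc mult_left_mono)
  qed
  have "\<exists>\<delta>>0. \<forall>y. is_solution_in F D y \<and> dist (y 0) x0 < \<delta> \<longrightarrow> (\<forall>t\<ge>0. dist (y t) x0 < \<epsilon>)"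
    if \<epsilon>: "\<epsilon> > 0" for \<epsilon>
  proof (intro exI[of _ "min \<rho> (\<epsilon> / (K + 1))"] conjI allI impI)
    fix y t assume "is_solution_in F D y \<and> dist (y 0) x0 < min \<rho> (\<epsilon> / (K + 1))" "0 \<le> (t::real)"
    hence y: "is_solution_in F D y" "norm (y 0 - x0) < \<rho>" "norm (y 0 - x0) < \<epsilon> / (K + 1)" "t \<ge> 0"
      by (auto simp: dist_norm)
    have "exp (- a * t) \<le> 1" using a y(4) by simp
    hence "(norm (y t - x0))^2 \<le> K * (norm (y 0 - x0))^2"
      using decay[OF y(1,2,4)] K by (smt (verit) mult_left_le mult_nonneg_nonneg zero_le_power2)
    also have "\<dots> \<le> (K + 1) * (norm (y 0 - x0))^2" by (simp add: distrib_right)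
    also have "\<dots> < (K + 1) * (\<epsilon> / (K + 1))^2"
      using y(3) K by (intro mult_strict_left_mono power_strict_mono) auto
    also have "\<dots> = \<epsilon>^2 / (K + 1)"
      using K by (simp add: power2_eq_square)
    also have "\<dots> \<le> \<epsilon>^2"
      using K by (simp add: divide_le_eq mult_le_cancel_left1)
    finally show "dist (y t) x0 < \<epsilon>"
      using \<epsilon> by (simp add: dist_norm power_less_imp_less_base)
  qed (use \<rho> \<epsilon> K in simp)
  moreover have "(y \<longlongrightarrow> x0) at_top" if y: "is_solution_in F D y" and y0: "dist (y 0) x0 < \<rho>" for y
  proof -
    have "((\<lambda>t. exp (- a * t)) \<longlongrightarrow> 0) at_top"
      using a by real_asymp
    hence "((\<lambda>t. K * (norm (y 0 - x0))^2 * exp (- a * t)) \<longlongrightarrow> 0) at_top"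
      by (rule tendsto_mult_right_zero)
    moreover have "\<forall>\<^sub>F t in at_top. norm ((norm (y t - x0))^2) \<le> K * (norm (y 0 - x0))^2 * exp (- a * t)"
      using eventually_ge_at_top[of 0] by eventually_elim (use decay y y0 in \<open>simp add: dist_norm\<close>)
    ultimately have "((\<lambda>t. (norm (y t - x0))^2) \<longlongrightarrow> 0) at_top"
      by (rule Lim_null_comparison[rotated])
    hence "((\<lambda>t. sqrt ((norm (y t - x0))^2)) \<longlongrightarrow> 0) at_top"
      using tendsto_real_sqrt by force
    hence "((\<lambda>t. norm (y t - x0)) \<longlongrightarrow> 0) at_top" by simp
    thus ?thesis by (simp add: tendsto_norm_zero_iff LIM_zero_cancel)
  qed
  ultimately show ?thesis
    unfolding asymp_stable_def using assms(1,2) \<rho> by blast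
qed

lemma sum_abs_squared_le: "(\<Sum>i\<in>A. \<bar>u i\<bar>)^2 \<le> real (card A) * (\<Sum>i\<in>A. (u i)^2 :: real)"
  using Cauchy_Schwarz_ineq_sum[of "\<lambda>i. \<bar>u i\<bar>" "\<lambda>i. 1" A] by (simp add: mult.commute)

section \<open>The simplex and the replicator--mutator field\<close>

context
  fixes pop :: "'s::finite \<Rightarrow> 'i::finite"
begin

lemma Delta_nonneg: "x \<in> Delta pop \<Longrightarrow> 0 \<le> x$s"
  by (simp add: Delta_def)

lemma Delta_sum: "x \<in> Delta pop \<Longrightarrow> (\<Sum>s\<in>{s. pop s = i}. x$s) = 1"
  by (simp add: Delta_def)

lemma Delta_le_1:
  assumes "x \<in> Delta pop"
  shows "x$s \<le> 1"
proof -
  have "x$s \<le> (\<Sum>t\<in>{t. pop t = pop s}. x$t)"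
    using assms by (intro member_le_sum) (auto simp: Delta_nonneg)
  thus ?thesis using Delta_sum[OF assms] by simp
qed

lemma convex_Delta: "convex (Delta pop)"
  unfolding convex_def Delta_def
  by (auto simp: sum.distrib simp flip: sum_distrib_left)

lemma compact_Delta: "compact (Delta pop)"
  unfolding compact_eq_bounded_closed
proof
  have "norm x \<le> real CARD('s)" if "x \<in> Delta pop" for x :: "real^'s"
  proof -
    have "norm x \<le> (\<Sum>s\<in>UNIV. \<bar>x$s\<bar>)" by (rule norm_le_l1_cart)
    also have "\<dots> \<le> (\<Sum>s\<in>(UNIV::'s set). 1)"
      using that by (intro sum_mono) (simp add: Delta_nonneg Delta_le_1)
    finally show ?thesis by simp
  qed
  thus "bounded (Delta pop)" unfolding bounded_iff by blast
next
  have "Delta pop = (\<Inter>s. {x. 0 \<le> x$s}) \<inter> (\<Inter>i. {x. (\<Sum>s\<in>{s. pop s = i}. x$s) = 1})"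
    unfolding Delta_def by auto
  thus "closed (Delta pop)"
    by (auto intro!: closed_Int closed_INT closed_Collect_le closed_Collect_eq continuous_intros)
qed

lemma int_Delta_nonempty:
  assumes "surj pop"
  shows "int_Delta pop \<noteq> {}"
proof -
  define c :: "real^'s" where "c = (\<chi> s. 1 / real (card {t. pop t = pop s}))"
  have card_pos: "card {t. pop t = i} > 0" for i
    using assms by (metis (mono_tags) card_gt_0_iff empty_Collect_eq finite surjD)
  have "(\<Sum>s\<in>{s. pop s = i}. c$s) = 1" for i
    using card_pos[of i] assms by (simp add: c_def surj_def) metis
  moreover have "0 < c$s" for s using card_pos[of "pop s"] by (simp add: c_def)
  ultimately have "c \<in> int_Delta pop" by (auto simp: int_Delta_def Delta_def less_imp_le)
  thus ?thesis by blast
qed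

lemma replace_pop_in_Delta:
  assumes x: "x \<in> Delta pop" and z: "z \<in> Delta_pop pop i"
  shows "replace_pop pop i x z \<in> Delta pop"
proof -
  have "(\<Sum>s\<in>{s. pop s = j}. replace_pop pop i x z $ s) = 1" for j
  proof (cases "j = i")
    case True
    hence "(\<Sum>s\<in>{s. pop s = j}. replace_pop pop i x z $ s) = (\<Sum>s\<in>{s. pop s = i}. z $ s)"
      by (intro sum.cong) (auto simp: replace_pop_def)
    thus ?thesis using z by (simp add: Delta_pop_def)
  next
    case False
    hence "(\<Sum>s\<in>{s. pop s = j}. replace_pop pop i x z $ s) = (\<Sum>s\<in>{s. pop s = j}. x $ s)"
      by (intro sum.cong) (auto simp: replace_pop_def)
    thus ?thesis using x by (simp add: Delta_sum)
  qed
  moreover have "0 \<le> replace_pop pop i x z $ s" for s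
    using x z by (auto simp: replace_pop_def Delta_pop_def Delta_nonneg)
  ultimately show ?thesis by (simp add: Delta_def)
qed

text \<open>On the simplex the coordinates of the types chosen by b are determined by the
  others, so these others already control the whole distance.\<close>
lemma norm_diff_le_unselected:
  assumes x: "x \<in> Delta pop" and y: "y \<in> Delta pop" and b: "\<And>i. pop (b i) = i"
  shows "norm (y - x) \<le> 2 * (\<Sum>s\<in>{s. s \<noteq> b (pop s)}. \<bar>y$s - x$s\<bar>)"
proof -
  let ?d = "\<lambda>s. \<bar>y$s - x$s\<bar>" and ?O = "\<lambda>i. {s. pop s = i \<and> s \<noteq> b i}"
  have split: "(\<Sum>s\<in>{s. pop s = i}. h s) = h (b i) + (\<Sum>s\<in>?O i. h s)" for h :: "'s \<Rightarrow> real" and i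
  proof -
    have "{s. pop s = i} = insert (b i) (?O i)" using b by auto
    thus ?thesis by simp
  qed
  have per_pop: "(\<Sum>s\<in>{s. pop s = i}. ?d s) \<le> 2 * (\<Sum>s\<in>?O i. ?d s)" for i
  proof -
    have "(\<Sum>s\<in>{s. pop s = i}. y$s - x$s) = 0"
      using Delta_sum[OF x] Delta_sum[OF y] by (simp add: sum_subtractf)
    hence "?d (b i) = \<bar>\<Sum>s\<in>?O i. y$s - x$s\<bar>"
      using split[of "\<lambda>s. y$s - x$s"] by (simp add: abs_minus_commute eq_neg_iff_add_eq_0)
    also have "\<dots> \<le> (\<Sum>s\<in>?O i. ?d s)" by (rule sum_abs)
    finally show ?thesis using split[of ?d i] by linarith
  qed
  have "norm (y - x) \<le> (\<Sum>s\<in>UNIV. ?d s)"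
    using norm_le_l1_cart[of "y - x"] by simp
  also have "\<dots> = (\<Sum>i\<in>UNIV. \<Sum>s\<in>{s. pop s = i}. ?d s)"
    using sum.group[of UNIV UNIV pop ?d] by simp
  also have "\<dots> \<le> (\<Sum>i\<in>UNIV. 2 * (\<Sum>s\<in>?O i. ?d s))"
    by (intro sum_mono per_pop)
  also have "\<dots> = 2 * (\<Sum>s\<in>{s. s \<noteq> b (pop s)}. ?d s)"
  proof -
    have "{s \<in> {s. s \<noteq> b (pop s)}. pop s = i} = ?O i" for i by auto
    hence "(\<Sum>i\<in>UNIV. \<Sum>s\<in>?O i. ?d s) = (\<Sum>s\<in>{s. s \<noteq> b (pop s)}. ?d s)"
      using sum.group[of "{s. s \<noteq> b (pop s)}" UNIV pop ?d] by simp
    thus ?thesis by (simp flip: sum_distrib_left)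
  qed
  finally show ?thesis .
qed

lemma sum_mult_gfit_eq_0:
  assumes "x \<in> Delta pop"
  shows "(\<Sum>s\<in>{s. pop s = i}. x$s * gfit pop f s x) = 0"
proof -
  have "(\<Sum>s\<in>{s. pop s = i}. x$s * gfit pop f s x)
      = fbar pop f i x - (\<Sum>s\<in>{s. pop s = i}. x$s) * fbar pop f i x"
    by (simp add: gfit_def fbar_def right_diff_distrib sum_subtractf sum_distrib_right)
  thus ?thesis using Delta_sum[OF assms] by simp
qed

lemma euler_step_phi_in_Delta:
  assumes x: "x \<in> Delta pop" and c: "c \<in> Delta pop" and "0 \<le> M" "0 < \<tau>"
    and G: "\<And>s. \<bar>gfit pop f s x\<bar> \<le> G" and \<tau>: "\<tau> * (G + M) \<le> 1"
  shows "x + \<tau> *\<^sub>R phi pop f c M x \<in> Delta pop"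
proof -
  let ?y = "x + \<tau> *\<^sub>R phi pop f c M x"
  have "0 \<le> 1 + \<tau> * (gfit pop f s x - M)" for s
  proof -
    have "\<tau> * (- G - M) \<le> \<tau> * (gfit pop f s x - M)"
      using G[of s] \<open>0 < \<tau>\<close> by (intro mult_left_mono) auto
    thus ?thesis using \<tau> by (simp add: algebra_simps)
  qed
  hence "0 \<le> x$s * (1 + \<tau> * (gfit pop f s x - M)) + \<tau> * M * c$s" for s
    using x c assms(3,4) by (simp add: Delta_nonneg)
  hence "0 \<le> ?y$s" for s by (simp add: phi_def algebra_simps)
  moreover have "(\<Sum>s\<in>{s. pop s = i}. ?y$s) = 1" for i
  proof -
    have "(\<Sum>s\<in>{s. pop s = i}. ?y$s) = (\<Sum>s\<in>{s. pop s = i}. x$s)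
        + \<tau> * (\<Sum>s\<in>{s. pop s = i}. x$s * gfit pop f s x)
        + \<tau> * M * ((\<Sum>s\<in>{s. pop s = i}. c$s) - (\<Sum>s\<in>{s. pop s = i}. x$s))"
      by (simp add: phi_def sum.distrib sum_subtractf algebra_simps flip: sum_distrib_left)
    thus ?thesis using sum_mult_gfit_eq_0[OF x] Delta_sum[OF x] Delta_sum[OF c] by simp
  qed
  ultimately show ?thesis by (simp add: Delta_def)
qed

text \<open>Near an equilibrium xe in which type s has a small share, the s-component of the
  field is dominated by the fitness term, up to a cross term that is quadratic
  in the deviation from xe.\<close>
lemma phi_component_deviation_le:
  assumes "phi pop f c M xe $ s = 0" and "0 \<le> M"
    and "gfit pop f s y \<le> - a" and "0 \<le> xe$s" "xe$s \<le> r"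
    and L: "\<bar>gfit pop f s y - gfit pop f s xe\<bar> \<le> L * norm (y - xe)"
  shows "(y$s - xe$s) * phi pop f c M y $ s
      \<le> - a * (y$s - xe$s)^2 + \<bar>y$s - xe$s\<bar> * (r * (L * norm (y - xe)))"
proof -
  let ?u = "y$s - xe$s" and ?dg = "gfit pop f s y - gfit pop f s xe"
  have phi_y: "phi pop f c M y $ s = ?u * (gfit pop f s y - M) + xe$s * ?dg"
    using assms(1) by (simp add: phi_def algebra_simps)
  have "?u * phi pop f c M y $ s = ?u^2 * (gfit pop f s y - M) + ?u * (xe$s * ?dg)"
    unfolding phi_y by (simp add: algebra_simps power2_eq_square)
  moreover have "?u^2 * (gfit pop f s y - M) \<le> ?u^2 * (- a)"
    using assms(2,3) by (intro mult_left_mono) auto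
  moreover have "?u * (xe$s * ?dg) \<le> \<bar>?u\<bar> * (r * (L * norm (y - xe)))"
  proof -
    have "xe$s * \<bar>?dg\<bar> \<le> r * (L * norm (y - xe))"
      using assms(4,5) L by (intro mult_mono) auto
    hence "\<bar>?u\<bar> * (xe$s * \<bar>?dg\<bar>) \<le> \<bar>?u\<bar> * (r * (L * norm (y - xe)))"
      by (simp add: mult_left_mono)
    moreover have "?u * (xe$s * ?dg) \<le> \<bar>?u\<bar> * (xe$s * \<bar>?dg\<bar>)"
      using assms(4) by (metis abs_ge_self abs_mult abs_of_nonneg)
    ultimately show ?thesis by linarith
  qed
  ultimately show ?thesis by (simp add: mult.commute)
qed

end

section \<open>Games with payoffs independent of the own population\<close>

locale game =
  fixes pop :: "'s::finite \<Rightarrow> 'i::finite"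
    and f :: "'s \<Rightarrow> real^'s \<Rightarrow> real"
    and f' :: "'s \<Rightarrow> real^'s \<Rightarrow> ((real^'s) \<Rightarrow>\<^sub>L real)"
    and U :: "(real^'s) set"
  assumes surj_pop: "surj pop"
    and Delta_subset_U: "Delta pop \<subseteq> U"
    and C1_f: "\<And>s. C1_on U (f s) (f' s)"
    and f'_own_pop: "\<And>s k x. x \<in> U \<Longrightarrow> pop k = pop s \<Longrightarrow> blinfun_apply (f' s x) (axis k 1) = 0"
begin

lemma f_has_derivative: "x \<in> U \<Longrightarrow> (f s has_derivative blinfun_apply (f' s x)) (at x)"
  using C1_f[of s] by (simp add: C1_on_def)

lemma f_bounded: "\<exists>F>0. \<forall>s. \<forall>x\<in>Delta pop. \<bar>f s x\<bar> \<le> F"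
proof -
  have "continuous_on (Delta pop) (f s)" for s
    using f_has_derivative Delta_subset_U has_derivative_continuous
    by (blast intro: continuous_at_imp_continuous_on)
  thus ?thesis using finite_family_bounded_on_compact[where g = f, OF compact_Delta[of pop]] by simp
qed

lemma f_lipschitz: "\<exists>L. \<forall>s. L-lipschitz_on (Delta pop) (f s)"
proof -
  have "continuous_on (Delta pop) (f' s)" for s
    using C1_f[of s] Delta_subset_U by (auto simp: C1_on_def intro: continuous_on_subset)
  then obtain B where B: "B > 0" "\<And>s x. x \<in> Delta pop \<Longrightarrow> norm (f' s x) \<le> B"
    using finite_family_bounded_on_compact[OF compact_Delta[of pop]] by blast
  have "B-lipschitz_on (Delta pop) (f s)" for s
  proof (rule bounded_derivative_imp_lipschitz[OF _ convex_Delta])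
    fix x assume "x \<in> Delta pop"
    thus "(f s has_derivative blinfun_apply (f' s x)) (at x within Delta pop)"
      using f_has_derivative Delta_subset_U has_derivative_at_withinI by blast
    show "onorm (blinfun_apply (f' s x)) \<le> B"
      using B(2)[OF \<open>x \<in> Delta pop\<close>] by (simp add: norm_blinfun.rep_eq)
  qed (use B in simp)
  thus ?thesis by blast
qed

lemma gfit_lipschitz: "\<exists>L>0. \<forall>s. L-lipschitz_on (Delta pop) (gfit pop f s)"
proof (rule lipschitz_on_finite_family)
  fix s
  obtain L where L: "\<And>t. L-lipschitz_on (Delta pop) (f t)" using f_lipschitz by blast
  obtain F where F: "F > 0" "\<And>t x. x \<in> Delta pop \<Longrightarrow> \<bar>f t x\<bar> \<le> F" using f_bounded by blast
  have "1-lipschitz_on (Delta pop) (\<lambda>x. x$t)" for t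
    by (rule lipschitz_onI) (simp_all add: dist_vec_nth_le)
  hence "(1 * L + F * 1)-lipschitz_on (Delta pop) (\<lambda>x. x$t * f t x)" for t
    using L F by (intro lipschitz_on_mult_real) (auto simp: Delta_nonneg Delta_le_1)
  hence "(\<Sum>t\<in>{t. pop t = pop s}. L + F)-lipschitz_on (Delta pop) (fbar pop f (pop s))"
    unfolding fbar_def by (intro lipschitz_on_sum) auto
  thus "\<exists>C. C-lipschitz_on (Delta pop) (gfit pop f s)"
    unfolding gfit_def[abs_def] using L by (blast intro: lipschitz_on_diff)
qed

lemma continuous_on_gfit: "continuous_on (Delta pop) (gfit pop f s)"
  using gfit_lipschitz lipschitz_on_continuous_on by blast

lemma gfit_bounded: "\<exists>G>0. \<forall>s. \<forall>x\<in>Delta pop. \<bar>gfit pop f s x\<bar> \<le> G"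
  using finite_family_bounded_on_compact[where g = "gfit pop f", OF compact_Delta continuous_on_gfit]
  by simp

lemma continuous_on_phi: "continuous_on (Delta pop) (phi pop f c M)"
  unfolding phi_def by (intro continuous_on_vec_lambda continuous_intros continuous_on_gfit)

lemma f'_own_pop_direction:
  assumes "x \<in> U" and v: "\<And>k. pop k \<noteq> pop s \<Longrightarrow> v$k = 0"
  shows "blinfun_apply (f' s x) v = 0"
proof -
  have "blinfun_apply (f' s x) v = blinfun_apply (f' s x) (\<Sum>k\<in>UNIV. v$k *\<^sub>R axis k 1)"
    using basis_expansion[of v] by (simp add: scalar_mult_eq_scaleR)
  also have "\<dots> = (\<Sum>k\<in>UNIV. v$k * blinfun_apply (f' s x) (axis k 1))"
    by (simp add: blinfun.sum_right blinfun.scaleR_right)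
  also have "\<dots> = 0"
    using v f'_own_pop[OF assms(1)] by (intro sum.neutral) force
  finally show ?thesis .
qed

lemma f_replace_own_pop:
  assumes x: "x \<in> Delta pop" and z: "z \<in> Delta_pop pop (pop s)"
  shows "f s (replace_pop pop (pop s) x z) = f s x"
proof -
  define w where "w = replace_pop pop (pop s) x z"
  define p where "p t = x + t *\<^sub>R (w - x)" for t
  have w: "w \<in> Delta pop" unfolding w_def by (rule replace_pop_in_Delta[OF x z])
  have p: "p t \<in> Delta pop" if "t \<in> {0..1}" for t
  proof -
    have "(1 - t) *\<^sub>R x + t *\<^sub>R w \<in> Delta pop"
      using that by (intro convexD[OF convex_Delta x w]) auto
    thus ?thesis unfolding p_def by (simp add: algebra_simps)
  qed
  have "((\<lambda>t. f s (p t)) has_derivative (\<lambda>h. blinfun_apply (f' s (p t)) (h *\<^sub>R (w - x))))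
      (at t within {0..1})" if "t \<in> {0..1}" for t
  proof -
    have "(p has_derivative (\<lambda>h. h *\<^sub>R (w - x))) (at t within {0..1})"
      unfolding p_def by (auto intro!: derivative_eq_intros)
    moreover have "(f s has_derivative blinfun_apply (f' s (p t))) (at (p t) within p ` {0..1})"
      using f_has_derivative p[OF that] Delta_subset_U has_derivative_at_withinI by blast
    ultimately show ?thesis
      using diff_chain_within by (simp add: o_def)
  qed
  moreover have "blinfun_apply (f' s (p t)) (h *\<^sub>R (w - x)) = 0" if "t \<in> {0..1}" for t h
    using p[OF that] Delta_subset_U
    by (auto simp: w_def replace_pop_def blinfun.scaleR_right intro!: f'_own_pop_direction)
  ultimately have "((\<lambda>t. f s (p t)) has_field_derivative 0) (at t within {0..1})"
    if "t \<in> {0..1}" for t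
    using that by (simp add: has_field_derivative_def flip: lambda_zero)
  then obtain C where "\<forall>t\<in>{0..1}. f s (p t) = C"
    using has_field_derivative_zero_constant[OF convex_real_interval(5)] by blast
  hence "f s (p 1) = f s (p 0)" by auto
  thus ?thesis unfolding p_def w_def by simp
qed

lemma axis_in_Delta_pop: "axis t 1 \<in> Delta_pop pop (pop t)"
  by (simp add: Delta_pop_def axis_def sum.delta)

lemma fbar_replace_axis:
  assumes "x \<in> Delta pop"
  shows "fbar pop f (pop t) (replace_pop pop (pop t) x (axis t 1)) = f t x"
proof -
  have "fbar pop f (pop t) (replace_pop pop (pop t) x (axis t 1))
      = (\<Sum>s\<in>{s. pop s = pop t}. if s = t then f t (replace_pop pop (pop t) x (axis t 1)) else 0)"
    unfolding fbar_def by (intro sum.cong) (auto simp: replace_pop_def axis_def)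
  also have "\<dots> = f t (replace_pop pop (pop t) x (axis t 1))" by simp
  also have "\<dots> = f t x" by (rule f_replace_own_pop[OF assms axis_in_Delta_pop])
  finally show ?thesis .
qed

text \<open>Deviating to a pure strategy t changes the payoff of population pop t to f t,
  so strictness forces x to be pure on every population, at the unique best reply.\<close>
lemma strict_nash_pure:
  assumes SN: "strict_nash pop f x"
  shows "\<exists>t. pop t = i \<and> (\<forall>s. pop s = i \<longrightarrow> x$s = (if s = t then 1 else 0))
      \<and> (\<forall>k. pop k = i \<and> k \<noteq> t \<longrightarrow> f k x < f t x)"
proof -
  let ?S = "{t. pop t = i}"
  have x: "x \<in> Delta pop" using SN unfolding strict_nash_def by (elim conjE)
  have strict: "\<forall>i. \<forall>z \<in> Delta_pop pop i. (\<exists>s. pop s = i \<and> z$s \<noteq> x$s) \<longrightarrow>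
      fbar pop f i x > fbar pop f i (replace_pop pop i x z)"
    using SN unfolding strict_nash_def by (elim conjE)
  have deviate: "f k x < fbar pop f (pop k) x" if "pop s = pop k" "axis k 1 $ s \<noteq> x$s" for k s
    using strict[rule_format, OF axis_in_Delta_pop] that fbar_replace_axis[OF x, of k] by metis
  obtain t0 where "pop t0 = i" using surj_pop by (metis surjD)
  hence "?S \<noteq> {}" by auto
  hence "Max ((\<lambda>t. f t x) ` ?S) \<in> (\<lambda>t. f t x) ` ?S" by simp
  then obtain t where t: "pop t = i" "f t x = Max ((\<lambda>t. f t x) ` ?S)" by auto
  have t_max: "f k x \<le> f t x" if "pop k = i" for k
    using that unfolding t(2) by simp
  have "fbar pop f i x \<le> (\<Sum>s\<in>?S. x$s * f t x)"
    unfolding fbar_def using t_max x by (intro sum_mono mult_left_mono) (auto simp: Delta_nonneg)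
  also have "\<dots> = f t x" using Delta_sum[OF x, of i] by (simp flip: sum_distrib_right)
  finally have "fbar pop f i x \<le> f t x" .
  hence pure: "x$s = (if s = t then 1 else 0)" if "pop s = i" for s
    using deviate[of s t] t(1) that unfolding axis_def by force
  have "fbar pop f i x = (\<Sum>s\<in>?S. if s = t then f t x else 0)"
    unfolding fbar_def by (intro sum.cong) (auto simp: pure)
  hence "fbar pop f i x = f t x" using t(1) by simp
  moreover have "f k x < fbar pop f i x" if "pop k = i" "k \<noteq> t" for k
    using deviate[of k k] pure[of k] that unfolding axis_def by simp
  ultimately show ?thesis using t(1) pure by auto
qed

end

section \<open>Strict Nash equilibria as attracting mutation limits\<close>

locale nash = game +
  fixes xstar :: "real^'s"
  assumes strict_nash_xstar: "strict_nash pop f xstar"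
begin

lemma xstar_in_Delta: "xstar \<in> Delta pop"
  using strict_nash_xstar unfolding strict_nash_def by (elim conjE)

definition best where
  "best i = (SOME t. pop t = i \<and> (\<forall>s. pop s = i \<longrightarrow> xstar$s = (if s = t then 1 else 0))
      \<and> (\<forall>k. pop k = i \<and> k \<noteq> t \<longrightarrow> f k xstar < f t xstar))"

lemma pop_best: "pop (best i) = i"
  and xstar_best: "pop s = i \<Longrightarrow> xstar$s = (if s = best i then 1 else 0)"
  and f_less_best: "pop k = i \<Longrightarrow> k \<noteq> best i \<Longrightarrow> f k xstar < f (best i) xstar"
  using someI_ex[OF strict_nash_pure[OF strict_nash_xstar, of i]]
  unfolding best_def[symmetric] by blast+

definition inferior where
  "inferior = {s. s \<noteq> best (pop s)}"

lemma xstar_inferior: "s \<in> inferior \<Longrightarrow> xstar$s = 0"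
  using xstar_best[of s "pop s"] by (simp add: inferior_def)

lemma gfit_xstar_inferior: "s \<in> inferior \<Longrightarrow> gfit pop f s xstar < 0"
proof -
  have "fbar pop f i xstar = (\<Sum>s\<in>{s. pop s = i}. if s = best i then f (best i) xstar else 0)" for i
    unfolding fbar_def by (intro sum.cong) (auto simp: xstar_best)
  hence "fbar pop f i xstar = f (best i) xstar" for i using pop_best[of i] by simp
  thus "s \<in> inferior \<Longrightarrow> gfit pop f s xstar < 0"
    using f_less_best[of s "pop s"] by (simp add: gfit_def inferior_def)
qed

lemma norm_diff_le_inferior:
  assumes "x \<in> Delta pop" "y \<in> Delta pop"
  shows "norm (y - x) \<le> 2 * (\<Sum>s\<in>inferior. \<bar>y$s - x$s\<bar>)"
proof -
  have "\<And>i. pop (best i) = i" by (rule pop_best)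
  from norm_diff_le_unselected[OF assms this] show ?thesis by (simp add: inferior_def)
qed

lemma norm_sq_le_sq_dist_inferior:
  assumes "x \<in> Delta pop" "y \<in> Delta pop"
  shows "(norm (y - x))^2 \<le> 4 * real (card inferior) * sq_dist_on inferior y x"
proof -
  have "(norm (y - x))^2 \<le> (2 * (\<Sum>s\<in>inferior. \<bar>y$s - x$s\<bar>))^2"
    using norm_diff_le_inferior[OF assms] by (intro power_mono) auto
  also have "\<dots> = 4 * (\<Sum>s\<in>inferior. \<bar>y$s - x$s\<bar>)^2" by (simp add: power_mult_distrib)
  also have "\<dots> \<le> 4 * (real (card inferior) * sq_dist_on inferior y x)"
    unfolding sq_dist_on_def by (intro mult_left_mono sum_abs_squared_le) simp
  finally show ?thesis by simp
qed

definition near where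
  "near r = {x \<in> Delta pop. \<forall>s\<in>inferior. x$s \<le> r}"

lemma near_subset_Delta: "near r \<subseteq> Delta pop"
  by (auto simp: near_def)

lemma xstar_in_near: "0 \<le> r \<Longrightarrow> xstar \<in> near r"
  by (simp add: near_def xstar_in_Delta xstar_inferior)

lemma compact_near: "compact (near r)"
proof -
  have "near r = Delta pop \<inter> (\<Inter>s\<in>inferior. {x. x$s \<le> r})" by (auto simp: near_def)
  thus ?thesis
    by (auto intro!: compact_Int_closed compact_Delta closed_INT closed_Collect_le continuous_intros)
qed

lemma convex_near: "convex (near r)"
proof -
  have "convex {x::real^'s. \<forall>s\<in>inferior. x$s \<le> r}"
    by (auto simp: convex_def intro!: convex_bound_le)
  moreover have "near r = Delta pop \<inter> {x. \<forall>s\<in>inferior. x$s \<le> r}" by (auto simp: near_def)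
  ultimately show ?thesis by (simp add: convex_Int convex_Delta)
qed

lemma norm_diff_xstar_near:
  assumes "x \<in> near r"
  shows "norm (x - xstar) \<le> 2 * real (card inferior) * r"
proof -
  have "norm (x - xstar) \<le> 2 * (\<Sum>s\<in>inferior. \<bar>x$s - xstar$s\<bar>)"
    using assms xstar_in_Delta by (intro norm_diff_le_inferior) (auto simp: near_def)
  also have "(\<Sum>s\<in>inferior. \<bar>x$s - xstar$s\<bar>) \<le> (\<Sum>s\<in>inferior. r)"
    using assms by (intro sum_mono) (auto simp: near_def xstar_inferior Delta_nonneg)
  finally show ?thesis by simp
qed

definition inferior_margin :: "real \<Rightarrow> real \<Rightarrow> bool" where
  "inferior_margin a r \<longleftrightarrow> 0 < a \<and> 0 < r \<and> (\<forall>x\<in>near r. \<forall>s\<in>inferior. gfit pop f s x \<le> - a)"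

lemma inferior_margin_exists: "\<exists>a r. inferior_margin a r"
proof -
  obtain L where L: "L > 0" "\<And>s. L-lipschitz_on (Delta pop) (gfit pop f s)"
    using gfit_lipschitz by blast
  define a where "a = Min (insert 1 ((\<lambda>s. - gfit pop f s xstar / 2) ` inferior))"
  have "a \<in> insert 1 ((\<lambda>s. - gfit pop f s xstar / 2) ` inferior)"
    unfolding a_def by (rule Min_in) auto
  hence a: "a > 0" using gfit_xstar_inferior by auto
  have a_le: "gfit pop f s xstar \<le> - 2 * a" if "s \<in> inferior" for s
  proof -
    have "a \<le> - gfit pop f s xstar / 2" unfolding a_def using that by (intro Min_le) auto
    thus ?thesis by linarith
  qed
  define r where "r = a / (2 * (real (card inferior) + 1) * L)"
  have r: "r > 0" unfolding r_def using a L by simp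
  have "gfit pop f s x \<le> - a" if x: "x \<in> near r" and s: "s \<in> inferior" for x s
  proof -
    have "norm (x - xstar) \<le> 2 * (real (card inferior) + 1) * r"
      using norm_diff_xstar_near[OF x] r by (simp add: algebra_simps)
    hence "L * norm (x - xstar) \<le> L * (2 * (real (card inferior) + 1) * r)"
      using L(1) by (intro mult_left_mono) auto
    also have "\<dots> = a" unfolding r_def using L(1) by simp
    finally have "L * norm (x - xstar) \<le> a" .
    moreover have "gfit pop f s x - gfit pop f s xstar \<le> L * norm (x - xstar)"
      using lipschitz_on_normD[OF L(2) _ xstar_in_Delta, of x] x by (auto simp: near_def dest: abs_le_D1)
    ultimately show ?thesis using a_le[OF s] by linarith
  qed
  thus ?thesis unfolding inferior_margin_def using a r by blast
qed

text \<open>Selection lowers the share of an inferior type by at least a times its share,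
  mutation raises it by at most M, so M \<le> a r keeps the shares below r.\<close>
lemma euler_step_phi_in_near:
  assumes margin: "inferior_margin a r0" and c: "c \<in> Delta pop" and M: "0 \<le> M"
    and r: "r \<le> r0" "M \<le> a * r"
    and G: "\<And>s x. x \<in> Delta pop \<Longrightarrow> \<bar>gfit pop f s x\<bar> \<le> G"
    and \<tau>: "0 < \<tau>" "\<tau> * (G + M) \<le> 1"
    and x: "x \<in> near r"
  shows "x + \<tau> *\<^sub>R phi pop f c M x \<in> near r"
proof -
  let ?y = "x + \<tau> *\<^sub>R phi pop f c M x"
  have xD: "x \<in> Delta pop" using x by (simp add: near_def)
  have "?y $ s \<le> r" if s: "s \<in> inferior" for s
  proof -
    let ?k = "1 + \<tau> * (gfit pop f s x - M)"
    have "\<tau> * (- G - M) \<le> \<tau> * (gfit pop f s x - M)"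
      using G[OF xD, of s] \<tau>(1) by (intro mult_left_mono) auto
    hence "0 \<le> ?k" using \<tau>(2) by (simp add: algebra_simps)
    moreover have "?k \<le> 1 - \<tau> * a"
    proof -
      have "x \<in> near r0" using x r(1) by (auto simp: near_def)
      hence "gfit pop f s x \<le> - a" using margin s by (simp add: inferior_margin_def)
      hence "\<tau> * (gfit pop f s x - M) \<le> \<tau> * (- a)" using \<tau>(1) M by (intro mult_left_mono) auto
      thus ?thesis by simp
    qed
    moreover have "0 \<le> x$s" "x$s \<le> r" using x s Delta_nonneg[OF xD] by (auto simp: near_def)
    ultimately have "x$s * ?k \<le> r * (1 - \<tau> * a)"
      by (intro mult_mono) auto
    moreover have "\<tau> * M * c$s \<le> \<tau> * (a * r)"
    proof -
      have "M * c$s \<le> M" using Delta_le_1[OF c, of s] M by (intro mult_left_le) auto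
      hence "M * c$s \<le> a * r" using r(2) by linarith
      thus ?thesis using \<tau>(1) by (simp add: mult.assoc)
    qed
    moreover have "?y $ s = x$s * ?k + \<tau> * M * c$s"
      by (simp add: phi_def algebra_simps)
    moreover have "r * (1 - \<tau> * a) + \<tau> * (a * r) = r" by (simp add: algebra_simps)
    ultimately show ?thesis by linarith
  qed
  moreover have "?y \<in> Delta pop"
    using M by (intro euler_step_phi_in_Delta[OF xD c _ \<tau>(1) G[OF xD] \<tau>(2)]) simp
  ultimately show ?thesis by (simp add: near_def)
qed

lemma mutation_equilibrium_near:
  assumes margin: "inferior_margin a r0" and c: "c \<in> Delta pop" and M: "0 < M"
    and r: "r \<le> r0" "M \<le> a * r"
  shows "\<exists>x\<in>near r. phi pop f c M x = 0"
proof -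
  have "0 < a * r" using M r(2) by linarith
  moreover have "0 < a" using margin by (simp add: inferior_margin_def)
  ultimately have "0 < r" by (rule zero_less_mult_pos)
  obtain G where G: "\<And>s x. x \<in> Delta pop \<Longrightarrow> \<bar>gfit pop f s x\<bar> \<le> G"
    using gfit_bounded by blast
  define \<tau> where "\<tau> = 1 / (\<bar>G\<bar> + M + 1)"
  have pos: "0 < \<bar>G\<bar> + M + 1" using M by simp
  hence \<tau>_pos: "0 < \<tau>" by (simp add: \<tau>_def)
  have "\<tau> * (G + M) \<le> \<tau> * (\<bar>G\<bar> + M + 1)" using \<tau>_pos by (intro mult_left_mono) auto
  also have "\<dots> = 1" using pos by (simp add: \<tau>_def)
  finally have \<tau>_small: "\<tau> * (G + M) \<le> 1" .
  define T where "T x = x + \<tau> *\<^sub>R phi pop f c M x" for x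
  have maps: "T \<in> near r \<rightarrow> near r"
    unfolding T_def using M by (intro Pi_I euler_step_phi_in_near[OF margin c _ r G \<tau>_pos \<tau>_small]) auto
  have cont: "continuous_on (near r) T"
  proof -
    have "continuous_on (Delta pop) T"
      unfolding T_def
      by (intro continuous_on_add continuous_on_id continuous_on_scaleR continuous_on_const
          continuous_on_phi)
    thus ?thesis by (rule continuous_on_subset) (rule near_subset_Delta)
  qed
  have "xstar \<in> near r" using \<open>0 < r\<close> by (intro xstar_in_near) simp
  hence "near r \<noteq> {}" by blast
  from brouwer[OF compact_near convex_near this cont maps]
  obtain x where x: "x \<in> near r" "T x = x" by blast
  hence "phi pop f c M x = 0" using \<tau>_pos by (simp add: T_def)
  thus ?thesis using x by blast
qed

lemma near_if_sq_dist_inferior_less: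
  assumes xe: "xe \<in> near r1" and r1: "0 \<le> r1" "r1 \<le> r0 / 2" and y: "y \<in> Delta pop"
    and V: "sq_dist_on inferior y xe < (r0 / 2)^2"
  shows "y \<in> near r0"
proof -
  have "y$s \<le> r0" if s: "s \<in> inferior" for s
  proof -
    have "(y$s - xe$s)^2 \<le> sq_dist_on inferior y xe"
      unfolding sq_dist_on_def using s by (intro member_le_sum) auto
    hence "\<bar>y$s - xe$s\<bar>^2 < (r0 / 2)^2" using V by (simp only: power2_abs)
    hence "\<bar>y$s - xe$s\<bar> < r0 / 2" by (rule power_less_imp_less_base) (use r1 in linarith)
    moreover have "xe$s \<le> r1" using xe s by (simp add: near_def)
    ultimately show ?thesis using r1 by linarith
  qed
  thus ?thesis using y by (simp add: near_def)
qed

lemma cross_term_le_sq_dist_inferior: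
  assumes "x \<in> Delta pop" "y \<in> Delta pop" "0 \<le> r" "0 \<le> L"
    and small: "4 * r * L * real (card inferior) \<le> a"
  shows "(\<Sum>s\<in>inferior. \<bar>y$s - x$s\<bar>) * (r * (L * norm (y - x)))
      \<le> a * sq_dist_on inferior y x / 2"
proof -
  define S1 where "S1 = (\<Sum>s\<in>inferior. \<bar>y$s - x$s\<bar>)"
  have "norm (y - x) \<le> 2 * S1"
    unfolding S1_def by (rule norm_diff_le_inferior[OF assms(1,2)])
  hence "S1 * (r * (L * norm (y - x))) \<le> S1 * (r * (L * (2 * S1)))"
    using assms(3,4) by (intro mult_left_mono) (auto simp: S1_def sum_nonneg)
  also have "\<dots> = 2 * r * L * S1^2" by (simp add: power2_eq_square)
  also have "\<dots> \<le> 2 * r * L * (real (card inferior) * sq_dist_on inferior y x)"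
    unfolding S1_def sq_dist_on_def
    using assms(3,4) by (intro mult_left_mono sum_abs_squared_le) auto
  also have "\<dots> \<le> a * sq_dist_on inferior y x / 2"
    using mult_right_mono[OF small sq_dist_on_nonneg[of inferior y x]]
    by (simp add: algebra_simps)
  finally show ?thesis unfolding S1_def .
qed

lemma sq_dist_inferior_decreasing:
  assumes margin: "inferior_margin a r0"
    and L: "\<And>s. L-lipschitz_on (Delta pop) (gfit pop f s)"
    and r1: "0 \<le> r1" "4 * r1 * L * real (card inferior) \<le> a"
    and xe: "xe \<in> near r1" "phi pop f c M xe = 0" and M: "0 \<le> M"
    and y: "y \<in> near r0"
  shows "(\<Sum>s\<in>inferior. 2 * (y$s - xe$s) * phi pop f c M y $ s) \<le> - a * sq_dist_on inferior y xe"
proof -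
  define u where "u s = y$s - xe$s" for s
  define N where "N = norm (y - xe)"
  have yD: "y \<in> Delta pop" and xeD: "xe \<in> Delta pop" using y xe near_subset_Delta by auto
  have "u s * phi pop f c M y $ s \<le> - a * (u s)^2 + \<bar>u s\<bar> * (r1 * (L * N))"
    if s: "s \<in> inferior" for s
    unfolding u_def N_def
  proof (rule phi_component_deviation_le[OF _ M])
    show "phi pop f c M xe $ s = 0" using xe(2) by simp
    show "gfit pop f s y \<le> - a" using margin y s by (simp add: inferior_margin_def)
    show "0 \<le> xe$s" by (rule Delta_nonneg[OF xeD])
    show "xe$s \<le> r1" using xe(1) s by (simp add: near_def)
    show "\<bar>gfit pop f s y - gfit pop f s xe\<bar> \<le> L * norm (y - xe)"
      using lipschitz_on_normD[OF L yD xeD] by simp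
  qed
  hence "(\<Sum>s\<in>inferior. u s * phi pop f c M y $ s)
      \<le> (\<Sum>s\<in>inferior. - a * (u s)^2 + \<bar>u s\<bar> * (r1 * (L * N)))"
    by (intro sum_mono)
  also have "\<dots> = - a * sq_dist_on inferior y xe + (\<Sum>s\<in>inferior. \<bar>u s\<bar>) * (r1 * (L * N))"
    unfolding sq_dist_on_def u_def
    by (simp only: sum.distrib flip: sum_distrib_left sum_distrib_right)
  also have "\<dots> \<le> - a * sq_dist_on inferior y xe + a * sq_dist_on inferior y xe / 2"
    unfolding u_def N_def
    using cross_term_le_sq_dist_inferior[OF xeD yD r1(1) lipschitz_on_nonneg[OF L] r1(2)]
    by simp
  finally have "(\<Sum>s\<in>inferior. u s * phi pop f c M y $ s) \<le> - a * sq_dist_on inferior y xe / 2"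
    by simp
  moreover have "(\<Sum>s\<in>inferior. 2 * (y$s - xe$s) * phi pop f c M y $ s)
      = 2 * (\<Sum>s\<in>inferior. u s * phi pop f c M y $ s)"
    unfolding u_def by (simp only: sum_distrib_left mult.assoc)
  ultimately show ?thesis by linarith
qed

lemma asymp_stable_near_equilibrium:
  assumes margin: "inferior_margin a r0"
    and L: "\<And>s. L-lipschitz_on (Delta pop) (gfit pop f s)"
    and r1: "0 \<le> r1" "r1 \<le> r0 / 2" "4 * r1 * L * real (card inferior) \<le> a"
    and xe: "xe \<in> near r1" "phi pop f c M xe = 0" and M: "0 \<le> M"
  shows "asymp_stable (phi pop f c M) (Delta pop) xe"
proof (rule asymp_stable_quadratic_lyapunov[where S = inferior])
  have xeD: "xe \<in> Delta pop" using xe near_subset_Delta by auto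
  show "xe \<in> Delta pop" "phi pop f c M xe = 0" by fact+
  show "0 < a" "0 < r0 / 2" using margin by (simp_all add: inferior_margin_def)
  show "0 \<le> 4 * real (card inferior)" by simp
  show "(norm (z - xe))^2 \<le> 4 * real (card inferior) * sq_dist_on inferior z xe"
    if "z \<in> Delta pop" for z
    by (rule norm_sq_le_sq_dist_inferior[OF xeD that])
  show "(\<Sum>s\<in>inferior. 2 * (z$s - xe$s) * phi pop f c M z $ s) \<le> - a * sq_dist_on inferior z xe"
    if "z \<in> Delta pop" "sq_dist_on inferior z xe < (r0 / 2)^2" for z
    using near_if_sq_dist_inferior_less[OF xe(1) r1(1,2) that]
    by (rule sq_dist_inferior_decreasing[OF margin L r1(1,3) xe M])
qed

lemma reached_by_mut_eq_xstar: "reached_by_mut_eq pop f {xstar}"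
  unfolding reached_by_mut_eq_def
proof
  fix c assume "c \<in> int_Delta pop"
  hence c: "c \<in> Delta pop" by (simp add: int_Delta_def)
  obtain a r0 where margin: "inferior_margin a r0" using inferior_margin_exists by blast
  hence a: "0 < a" and r0: "0 < r0" by (simp_all add: inferior_margin_def)
  define r where "r n = r0 / real (Suc n)" for n
  define Ms where "Ms n = a * r n" for n
  have Ms_pos: "0 < Ms n" for n using a r0 by (simp add: Ms_def r_def)
  have "\<exists>x\<in>near (r n). phi pop f c (Ms n) x = 0" for n
  proof (rule mutation_equilibrium_near[OF margin c Ms_pos])
    show "r n \<le> r0" using r0 by (simp add: r_def divide_le_eq)
  qed (simp add: Ms_def)
  hence "\<forall>n. \<exists>x. x \<in> near (r n) \<and> phi pop f c (Ms n) x = 0" by blast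
  from choice[OF this] obtain xs where "\<forall>n. xs n \<in> near (r n) \<and> phi pop f c (Ms n) (xs n) = 0"
    by blast
  hence xs: "\<And>n. xs n \<in> near (r n)" "\<And>n. phi pop f c (Ms n) (xs n) = 0" by simp_all
  have r_lim: "r \<longlonglongrightarrow> 0"
    unfolding r_def using LIMSEQ_Suc[OF lim_const_over_n[of r0]] by simp
  hence "Ms \<longlonglongrightarrow> 0" unfolding Ms_def by (rule tendsto_mult_right_zero)
  moreover have "xs n \<in> Delta pop" for n using xs(1) near_subset_Delta by blast
  ultimately have "mut_eq_seq pop f c xs Ms"
    unfolding mut_eq_seq_def using Ms_pos xs(2) by simp
  moreover have "xs \<longlonglongrightarrow> xstar"
  proof -
    have "\<forall>n. norm ((\<lambda>n. xs n - xstar) n) \<le> 2 * real (card inferior) * r n"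
      using xs(1) norm_diff_xstar_near by simp
    moreover have "(\<lambda>n. 2 * real (card inferior) * r n) \<longlonglongrightarrow> 0"
      using r_lim by (rule tendsto_mult_right_zero)
    ultimately have "(\<lambda>n. xs n - xstar) \<longlonglongrightarrow> 0"
      by (rule Lim_null_comparison[OF always_eventually])
    thus ?thesis by (rule LIM_zero_cancel)
  qed
  ultimately show "\<exists>xs Ms. mut_eq_seq pop f c xs Ms \<and> (\<exists>x\<in>{xstar}. xs \<longlonglongrightarrow> x)"
    by (intro exI[of _ xs] exI[of _ Ms]) simp
qed

lemma mutation_limit_xstar: "mutation_limit pop f {xstar}"
proof -
  have "\<not> reached_by_mut_eq pop f {}"
    using int_Delta_nonempty[OF surj_pop] unfolding reached_by_mut_eq_def by auto
  moreover have "Y = {}" if "Y \<subset> {xstar}" for Y using that by auto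
  ultimately show ?thesis
    unfolding mutation_limit_def using reached_by_mut_eq_xstar xstar_in_Delta by auto
qed

text \<open>The radius does not depend on c or M: this uniformity is what makes all
  equilibria of small rate close to xstar stable at once.\<close>
lemma equilibria_near_xstar_asymp_stable:
  "\<exists>r>0. \<forall>c M xe. 0 \<le> M \<longrightarrow> xe \<in> near r \<longrightarrow> phi pop f c M xe = 0 \<longrightarrow>
      asymp_stable (phi pop f c M) (Delta pop) xe"
proof -
  obtain a r0 where margin: "inferior_margin a r0" using inferior_margin_exists by blast
  hence a: "0 < a" and r0: "0 < r0" by (simp_all add: inferior_margin_def)
  obtain L where L: "0 < L" "\<And>s. L-lipschitz_on (Delta pop) (gfit pop f s)"
    using gfit_lipschitz by blast
  define K where "K = real (card inferior)"
  define r where "r = min (r0 / 2) (a / (4 * L * (K + 1)))"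
  have K: "0 \<le> K" by (simp add: K_def)
  have r: "0 < r" "r \<le> r0 / 2" using a r0 L K by (simp_all add: r_def)
  have "r \<le> a / (4 * L * (K + 1))" by (simp add: r_def)
  hence "r * (4 * L * (K + 1)) \<le> a" using L K by (simp add: le_divide_eq)
  moreover have "4 * r * L * K \<le> r * (4 * L * (K + 1))" using r L by (simp add: algebra_simps)
  ultimately have "4 * r * L * real (card inferior) \<le> a" unfolding K_def by linarith
  with asymp_stable_near_equilibrium[OF margin L(2) less_imp_le[OF r(1)] r(2)] r(1)
  show ?thesis by blast
qed

lemma mutation_equilibria_eventually_asymp_stable:
  assumes seq: "mut_eq_seq pop f c xs Ms" and lim: "xs \<longlonglongrightarrow> xstar"
  shows "\<exists>m>0. \<forall>n. Ms n < m \<longrightarrow> asymp_stable (phi pop f c (Ms n)) (Delta pop) (xs n)"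
proof -
  have xs: "\<And>n. 0 < Ms n" "\<And>n. phi pop f c (Ms n) (xs n) = 0" "\<And>n. xs n \<in> Delta pop"
    using seq by (simp_all add: mut_eq_seq_def)
  obtain r where r: "0 < r" and stable: "\<And>M xe. 0 \<le> M \<Longrightarrow> xe \<in> near r \<Longrightarrow>
      phi pop f c M xe = 0 \<Longrightarrow> asymp_stable (phi pop f c M) (Delta pop) xe"
    using equilibria_near_xstar_asymp_stable by blast
  obtain N where N: "\<And>n. n \<ge> N \<Longrightarrow> norm (xs n - xstar) < r"
    using lim r unfolding LIMSEQ_iff by blast
  define m where "m = Min (insert 1 (Ms ` {..<N}))"
  have "0 < m" unfolding m_def using xs(1) by (subst Min_gr_iff) auto
  moreover have "asymp_stable (phi pop f c (Ms n)) (Delta pop) (xs n)" if "Ms n < m" for n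
  proof -
    have "N \<le> n"
    proof (rule ccontr)
      assume "\<not> N \<le> n"
      hence "m \<le> Ms n" unfolding m_def by (intro Min_le) auto
      thus False using \<open>Ms n < m\<close> by simp
    qed
    hence close: "norm (xs n - xstar) < r" by (rule N)
    have "xs n $ s \<le> r" if "s \<in> inferior" for s
    proof -
      have "\<bar>(xs n - xstar) $ s\<bar> \<le> norm (xs n - xstar)" by (rule component_le_norm_cart)
      thus ?thesis using close xstar_inferior[OF that] by simp
    qed
    hence "xs n \<in> near r" using xs(3) by (simp add: near_def)
    with stable[OF less_imp_le[OF xs(1)] _ xs(2)] show ?thesis by blast
  qed
  ultimately show ?thesis by (intro exI[of _ m]) simp
qed

end

theorem mainTheorem10:
  fixes pop :: "'s::finite \<Rightarrow> 'i::finite"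
    and f :: "'s \<Rightarrow> real^'s \<Rightarrow> real"
    and f' :: "'s \<Rightarrow> real^'s \<Rightarrow> ((real^'s) \<Rightarrow>\<^sub>L real)"
    and U :: "(real^'s) set"
    and xstar :: "real^'s"
  assumes "surj pop"
    and "open U" and "Delta pop \<subseteq> U"
    and "\<And>s. C1_on U (f s) (f' s)"
    and "\<And>s k x. x \<in> U \<Longrightarrow> pop k = pop s \<Longrightarrow> blinfun_apply (f' s x) (axis k 1) = 0"
    and "strict_nash pop f xstar"
  shows "attracting_mutation_limit pop f {xstar}"
proof -
  interpret nash pop f f' U xstar
    by unfold_locales (use assms in auto)
  show ?thesis
    unfolding attracting_mutation_limit_def
    using mutation_limit_xstar mutation_equilibria_eventually_asymp_stable by blast
qed

end
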